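(* Let $K$ and $K'$ be two non-degenerate CMIs, with $\mathrm{can}(\mathrm{pur}(K))=(C,\langle\mathbb I_K,\mathbb I_K,P_i,1\le i\le t\rangle)$ and $\mathrm{can}(\mathrm{pur}(K'))=(C',\langle\mathbb I_{K'},\mathbb I_{K'},P'_j,1\le j\le s\rangle)$. If $K$ implies $K'$, then $\mathbb I_{K'}\subseteq\mathbb I_K$.
   Context: Setting: $X_1,\dots,X_n$ jointly distributed discrete random variables with $H(X_i)<\infty$; distribution unspecified. $X_\alpha=(X_i,i\in\alpha)$, $X_\emptyset$ constant. A CMI is $K=(C,\langle Q_1,\dots,Q_k\rangle)$, $k\ge0$, $C\subseteq\{1,\dots,n\}$, $\langle\cdot\rangle$ an unordered multiset of subsets; valid (for a given distribution) if $\sum_iH(X_{Q_i}|X_C)-H(X_{Q_1},\dots,X_{Q_k}|X_C)=0$. Empty members may be deleted. Degenerate = valid for every distribution, written $(\cdot,\langle\ \rangle)$. "$K$ implies $K'$": for every joint distribution, if $K$ is valid then $K'$ is valid. $\mathrm{pur}(K)=(C,\langle Q_i\setminus C:Q_i\setminus C\ne\emptyset\rangle)$. For pure $K$: $\mathbb I_K$ = indices lying in at least two members of the collection if $k\ge2$, else $\emptyset$; $P_1,\dots,P_t$ the nonempty sets among $Q_i\setminus\mathbb I_K$; $\mathrm{can}(K)=(\cdot,\langle\ \rangle)$ if $k\le1$, $(C,\langle\mathbb I_K,\mathbb I_K\rangle)$ if $k\ge2,\mathbb I_K\ne\emptyset,t\le1$, $(C,\langle P_1..P_t\rangle)$ if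 $k\ge2,\mathbb I_K=\emptyset$, $(C,\langle\mathbb I_K,\mathbb I_K,P_1..P_t\rangle)$ if $k\ge2,\mathbb I_K\ne\emptyset,t\ge2$. For a general CMI $K$, $\mathbb I_K$ is the repeated-index set of $\mathrm{pur}(K)$. General-form notation: copies of $\mathbb I_K$ omitted when empty, $t=0$ for the case $(C,\langle\mathbb I_K,\mathbb I_K\rangle)$. *)

theory Defs
  imports "HOL-Analysis.Analysis" "HOL-Probability.Probability" "HOL-Library.Multiset"
begin

text \<open>A joint distribution of X_1,...,X_n (discrete, values coded in nat) is a pmf on
  nat \<Rightarrow> nat; coordinate i is X_i (only i in {1..n} matter).\<close>

type_synonym jdist = "(nat \<Rightarrow> nat) pmf"

type_synonym cmi = "nat set \<times> nat set multiset"

definition marg :: "jdist \<Rightarrow> nat set \<Rightarrow> (nat \<Rightarrow> nat) pmf" where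
  "marg p \<alpha> = map_pmf (\<lambda>\<omega> i. if i \<in> \<alpha> then \<omega> i else 0) p"

definition ent_terms :: "'a pmf \<Rightarrow> 'a \<Rightarrow> real" where
  "ent_terms q x = - pmf q x * log 2 (pmf q x)"

definition entropy_pmf :: "'a pmf \<Rightarrow> real" where
  "entropy_pmf q = infsum (ent_terms q) UNIV"

definition finite_entropy :: "'a pmf \<Rightarrow> bool" where
  "finite_entropy q \<longleftrightarrow> ent_terms q summable_on UNIV"

definition H :: "jdist \<Rightarrow> nat set \<Rightarrow> real" where
  "H p \<alpha> = entropy_pmf (marg p \<alpha>)"

definition admissible :: "nat \<Rightarrow> jdist \<Rightarrow> bool" where
  "admissible n p \<longleftrightarrow> (\<forall>i\<in>{1..n}. finite_entropy (marg p {i}))"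

definition cmi_on :: "nat \<Rightarrow> cmi \<Rightarrow> bool" where
  "cmi_on n K \<longleftrightarrow> fst K \<subseteq> {1..n} \<and> (\<forall>Q\<in>#snd K. Q \<subseteq> {1..n})"

definition valid :: "jdist \<Rightarrow> cmi \<Rightarrow> bool" where
  "valid p K \<longleftrightarrow>
     (let C = fst K; Qs = snd K in
       (\<Sum>Q\<in>#Qs. H p (Q \<union> C) - H p C) - (H p (\<Union>(set_mset Qs) \<union> C) - H p C) = 0)"

definition degenerate :: "nat \<Rightarrow> cmi \<Rightarrow> bool" where
  "degenerate n K \<longleftrightarrow> (\<forall>p. admissible n p \<longrightarrow> valid p K)"

definition cmi_implies :: "nat \<Rightarrow> cmi \<Rightarrow> cmi \<Rightarrow> bool" where
  "cmi_implies n K K' \<longleftrightarrow> (\<forall>p. admissible n p \<longrightarrow> valid p K \<longrightarrow> valid p K')"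

definition pur :: "cmi \<Rightarrow> cmi" where
  "pur K = (fst K, image_mset (\<lambda>Q. Q - fst K) (filter_mset (\<lambda>Q. Q - fst K \<noteq> {}) (snd K)))"

definition rep_pure :: "cmi \<Rightarrow> nat set" where
  "rep_pure K = (if size (snd K) \<ge> 2
     then {i. size (filter_mset (\<lambda>Q. i \<in> Q) (snd K)) \<ge> 2} else {})"

definition rep_idx :: "cmi \<Rightarrow> nat set" where
  "rep_idx K = rep_pure (pur K)"

end

theory Submission
  imports Defs
begin

text \<open>Let \<open>X\<^sub>i\<close> be a fair bit and all other variables constant. For this distribution
  \<open>H(X\<^sub>\<alpha>)\<close> is the indicator of \<open>i \<in> \<alpha>\<close>, so a CMI with \<open>i \<notin> C\<close> is valid iff at most one
  member contains \<open>i\<close>, i.e. iff \<open>i \<notin> \<I>\<^sub>K\<close>. Hence if \<open>i \<in> \<I>\<^sub>K\<^sub>' - \<I>\<^sub>K\<close>, this distribution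
  satisfies \<open>K\<close> but not \<open>K'\<close>.\<close>

lemma ent_terms_outside_support: "x \<notin> set_pmf q \<Longrightarrow> ent_terms q x = 0"
  by (simp add: ent_terms_def set_pmf_iff)

lemma entropy_pmf_finite_support:
  assumes "finite (set_pmf q)"
  shows "entropy_pmf q = (\<Sum>x\<in>set_pmf q. ent_terms q x)"
proof -
  have "infsum (ent_terms q) UNIV = infsum (ent_terms q) (set_pmf q)"
    by (rule infsum_cong_neutral) (auto simp: ent_terms_outside_support)
  then show ?thesis
    using assms by (simp add: entropy_pmf_def)
qed

lemma finite_entropy_finite_support:
  assumes "finite (set_pmf q)"
  shows "finite_entropy q"
proof -
  have "ent_terms q summable_on UNIV \<longleftrightarrow> ent_terms q summable_on (set_pmf q)"
    by (rule summable_on_cong_neutral) (auto simp: ent_terms_outside_support)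
  then show ?thesis
    using assms by (simp add: finite_entropy_def)
qed

lemma entropy_pmf_return: "entropy_pmf (return_pmf x) = 0"
  by (simp add: entropy_pmf_finite_support ent_terms_def)

lemma entropy_pmf_of_set:
  assumes "finite S" "S \<noteq> {}"
  shows "entropy_pmf (pmf_of_set S) = log 2 (card S)"
proof -
  have "entropy_pmf (pmf_of_set S) = (\<Sum>x\<in>S. - (1 / card S) * log 2 (1 / card S))"
    using assms by (simp add: entropy_pmf_finite_support ent_terms_def)
  also have "\<dots> = log 2 (card S)"
    using assms by (simp add: log_divide)
  finally show ?thesis .
qed

definition bit_at :: "nat \<Rightarrow> jdist" where
  "bit_at i = pmf_of_set {\<lambda>_. 0, \<lambda>j. if j = i then 1 else 0}"

lemma set_pmf_bit_at: "set_pmf (bit_at i) = {\<lambda>_. 0, \<lambda>j. if j = i then 1 else 0}"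
  by (simp add: bit_at_def)

lemma entropy_bit_at: "entropy_pmf (bit_at i) = 1"
proof -
  have "(\<lambda>_. 0) \<noteq> (\<lambda>j. if j = i then 1 else 0 :: nat)"
    by (metis zero_neq_one)
  then show ?thesis
    by (simp add: bit_at_def entropy_pmf_of_set)
qed

lemma marg_bit_at: "marg (bit_at i) A = (if i \<in> A then bit_at i else return_pmf (\<lambda>_. 0))"
proof (cases "i \<in> A")
  case True
  have "marg (bit_at i) A = map_pmf id (bit_at i)"
    unfolding marg_def
    by (rule map_pmf_cong) (use True in \<open>auto simp: set_pmf_bit_at fun_eq_iff\<close>)
  with True show ?thesis by simp
next
  case False
  have "marg (bit_at i) A = map_pmf (\<lambda>_. \<lambda>_. 0) (bit_at i)"
    unfolding marg_def
    by (rule map_pmf_cong) (use False in \<open>auto simp: set_pmf_bit_at fun_eq_iff\<close>)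
  with False show ?thesis by simp
qed

lemma H_bit_at: "H (bit_at i) A = (if i \<in> A then 1 else 0)"
  by (simp add: H_def marg_bit_at entropy_bit_at entropy_pmf_return)

lemma admissible_bit_at: "admissible n (bit_at i)"
  unfolding admissible_def marg_bit_at
  by (simp add: finite_entropy_finite_support set_pmf_bit_at)

definition occurrences :: "nat set multiset \<Rightarrow> nat \<Rightarrow> nat" where
  "occurrences Qs i = size (filter_mset (\<lambda>Q. i \<in> Q) Qs)"

lemma sum_mset_indicator_occurrences:
  "(\<Sum>Q\<in>#Qs. if i \<in> Q then 1 else 0 :: real) = occurrences Qs i"
  by (induction Qs) (auto simp: occurrences_def)

lemma occurrences_pos_iff: "occurrences Qs i > 0 \<longleftrightarrow> i \<in> \<Union>(set_mset Qs)"
  by (auto simp: occurrences_def nonempty_has_size[symmetric])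

lemma occurrences_le_size: "occurrences Qs i \<le> size Qs"
  by (simp add: occurrences_def size_filter_mset_lesseq)

lemma occurrences_pur:
  "i \<notin> fst K \<Longrightarrow> occurrences (snd (pur K)) i = occurrences (snd K) i"
  unfolding pur_def occurrences_def
  by (simp add: filter_mset_image_mset filter_filter_mset)
     (rule arg_cong[where f=size], rule filter_mset_cong, auto)

lemma i_notin_fst_if_occurs_in_pur:
  "occurrences (snd (pur K)) i > 0 \<Longrightarrow> i \<notin> fst K"
  by (auto simp: occurrences_pos_iff pur_def)

lemma rep_idx_iff: "i \<in> rep_idx K \<longleftrightarrow> i \<notin> fst K \<and> occurrences (snd K) i \<ge> 2"
proof
  assume "i \<in> rep_idx K"
  then have "occurrences (snd (pur K)) i \<ge> 2"
    by (auto simp: rep_idx_def rep_pure_def occurrences_def split: if_splits)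
  moreover from this have "i \<notin> fst K"
    by (simp add: i_notin_fst_if_occurs_in_pur)
  ultimately show "i \<notin> fst K \<and> occurrences (snd K) i \<ge> 2"
    by (simp add: occurrences_pur)
next
  assume "i \<notin> fst K \<and> occurrences (snd K) i \<ge> 2"
  then have "occurrences (snd (pur K)) i \<ge> 2"
    by (simp add: occurrences_pur)
  moreover from this have "size (snd (pur K)) \<ge> 2"
    using occurrences_le_size order_trans by blast
  ultimately show "i \<in> rep_idx K"
    by (simp add: rep_idx_def rep_pure_def occurrences_def)
qed

lemma valid_bit_at_iff_notin_rep_idx: "valid (bit_at i) K \<longleftrightarrow> i \<notin> rep_idx K"
proof (cases "i \<in> fst K")
  case True
  then show ?thesis
    by (simp add: valid_def H_bit_at Let_def rep_idx_iff)
next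
  case False
  obtain C Qs where K: "K = (C, Qs)"
    by fastforce
  have "valid (bit_at i) K \<longleftrightarrow>
      real (occurrences Qs i) - (if i \<in> \<Union>(set_mset Qs) then 1 else 0) = 0"
    using False sum_mset_indicator_occurrences[of i Qs]
    by (simp add: valid_def H_bit_at Let_def K)
  also have "\<dots> \<longleftrightarrow> occurrences Qs i \<le> 1"
    using occurrences_pos_iff[of Qs i] by auto
  finally show ?thesis
    using False by (auto simp: rep_idx_iff K)
qed

theorem mainTheorem7:
  fixes n :: nat and K K' :: cmi
  assumes "cmi_on n K" and "cmi_on n K'"
    and "\<not> degenerate n K" and "\<not> degenerate n K'"
    and "cmi_implies n K K'"
  shows "rep_idx K' \<subseteq> rep_idx K"
proof
  fix i
  assume "i \<in> rep_idx K'"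
  then have "\<not> valid (bit_at i) K'"
    by (simp add: valid_bit_at_iff_notin_rep_idx)
  then have "\<not> valid (bit_at i) K"
    using \<open>cmi_implies n K K'\<close> admissible_bit_at by (auto simp: cmi_implies_def)
  then show "i \<in> rep_idx K"
    by (simp add: valid_bit_at_iff_notin_rep_idx)
qed

end
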